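(* Let $0\le k\le n$ and let quadratic-form data be given: $h\in\mathbb F_2^n$, linearly independent $v_1,\dots,v_k\in\mathbb F_2^n$, $d\in\mathbb F_2^k$, an upper-triangular $J\in\mathbb F_2^{k\times k}$, and a nonzero $\gamma\in\mathbb C$. Run the following procedure. Set $a_t=d_t+2J_{tt}\in\mathbb Z_4$ and let $B\in\mathbb F_2^{k\times k}$ be the symmetric zero-diagonal matrix with $B_{ij}=J_{ij}$ for $i<j$, $B_{ij}=J_{ji}$ for $i>j$. Create tables $A,V,C$ of length $2^k$ initialized to $0$ and set $A[2^{t-1}]=a_t$, $V[2^{t-1}]=v_t$, $C[2^{t-1}]=$ the $t$-th column of $B$ ($t=1,\dots,k$). Initialize a complex array $\psi$ of length $2^n$ to zero, set $y\gets 0\in\mathbb F_2^k$, $x\gets h$, $p\gets 0\in\mathbb F_2^k$, $q\gets 0\in\mathbb Z_4$, and $\psi_x\gets\gamma$. For $m=1,\dots,2^k-1$: let $f\gets m\,\&\,(-m)$; if $(y\,\&\,f)=0$ set $q\gets q+A[f]+2\cdot\mathbf 1[(p\,\&\,f)\neq 0]\pmod 4$, otherwise set $q\gets q-A[f]+2\cdot\mathbf 1[(p\,\&\,f)\neq 0]\pmod 4$; then set $y\gets y\oplus f$, $x\gets x\oplus V[f]$, $p\gets p\oplus C[f]$, and $\psi_x\gets\gamma\,\mathrm i^{q}$. Return $\psi$. Then the returned array is exactly the amplitude vector $(\psi_x)_{x\in\mathbb F_2^n}$ with \[ \psi_{h\oplus\sum_{t=1}^k y_t v_t}=\gamma\,\mathrm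 i^{d^\top y}(-1)^{y^\top J y}\quad\text{for all } y\in\mathbb F_2^k, \] and $\psi_x=0$ for all $x\notin h+\operatorname{span}\{v_1,\dots,v_k\}$.
   Context: $\mathbb F_2=\{0,1\}$, $\oplus$ is XOR. A $k$-bit vector $y\in\mathbb F_2^k$ is encoded as the integer $\sum_{t=1}^k y_t 2^{t-1}$ (coordinate $t$ is the bit of value $2^{t-1}$); similarly for $n$-bit vectors, which index the array $\psi$. $\&$ is bitwise AND on these integers, $-m$ is two's-complement negation so that $m\,\&\,(-m)$ is the lowest set bit of $m$, and $\mathbf 1[\cdot]$ is the indicator. In the exponents $d^\top y$ and $y^\top Jy$, bits are treated as integers with ordinary integer products; $\mathrm i^{q}$ depends only on $q$ mod $4$. This data (a quadratic-form description) describes an $n$-qubit stabilizer state with support the affine space $h+\operatorname{span}\{v_1,\dots,v_k\}$. *)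

theory Defs
  imports Complex_Main
begin

unbundle bit_operations_syntax

text \<open>Vectors in F_2^n are encoded as natural numbers (bit t-1 = coordinate t).
  The coefficient vector d and matrix J are given coordinatewise (indices 1..k),
  with entries in F_2 represented as bool.\<close>

definition lowbit :: "nat \<Rightarrow> nat" where
  "lowbit m = nat (int m AND - int m)"

definition combo :: "nat \<Rightarrow> (nat \<Rightarrow> nat) \<Rightarrow> nat \<Rightarrow> nat" where
  "combo k v y = foldr (\<lambda>t acc. (if bit y (t - 1) then v t else 0) XOR acc) [1..<k+1] 0"

definition lin_indep_F2 :: "nat \<Rightarrow> (nat \<Rightarrow> nat) \<Rightarrow> bool" where
  "lin_indep_F2 k v \<longleftrightarrow> (\<forall>y < 2^k. y \<noteq> 0 \<longrightarrow> combo k v y \<noteq> 0)"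

definition Bmat :: "(nat \<Rightarrow> nat \<Rightarrow> bool) \<Rightarrow> nat \<Rightarrow> nat \<Rightarrow> bool" where
  "Bmat J i j = (if i < j then J i j else if j < i then J j i else False)"

definition Bcol :: "nat \<Rightarrow> (nat \<Rightarrow> nat \<Rightarrow> bool) \<Rightarrow> nat \<Rightarrow> nat" where
  "Bcol k J t = (\<Sum>i=1..k. of_bool (Bmat J i t) * 2^(i - 1))"

definition tableA :: "nat \<Rightarrow> (nat \<Rightarrow> bool) \<Rightarrow> (nat \<Rightarrow> nat \<Rightarrow> bool) \<Rightarrow> int list" where
  "tableA k d J = foldl (\<lambda>A t. A[2^(t-1) := (of_bool (d t) + 2 * of_bool (J t t)) mod 4])
      (replicate (2^k) 0) [1..<k+1]"

definition tableV :: "nat \<Rightarrow> (nat \<Rightarrow> nat) \<Rightarrow> nat list" where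
  "tableV k v = foldl (\<lambda>V t. V[2^(t-1) := v t]) (replicate (2^k) 0) [1..<k+1]"

definition tableC :: "nat \<Rightarrow> (nat \<Rightarrow> nat \<Rightarrow> bool) \<Rightarrow> nat list" where
  "tableC k J = foldl (\<lambda>C t. C[2^(t-1) := Bcol k J t]) (replicate (2^k) 0) [1..<k+1]"

type_synonym state = "nat \<times> nat \<times> nat \<times> int \<times> complex list"

definition step :: "int list \<Rightarrow> nat list \<Rightarrow> nat list \<Rightarrow> complex \<Rightarrow> state \<Rightarrow> nat \<Rightarrow> state" where
  "step A V C \<gamma> s m = (case s of (y, x, p, q, \<psi>) \<Rightarrow>
     let f = lowbit m;
         q' = (if y AND f = 0
               then (q + A ! f + 2 * of_bool (p AND f \<noteq> 0)) mod 4
               else (q - A ! f + 2 * of_bool (p AND f \<noteq> 0)) mod 4);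
         y' = y XOR f;
         x' = x XOR (V ! f);
         p' = p XOR (C ! f)
     in (y', x', p', q', \<psi>[x' := \<gamma> * \<i> ^ nat q']))"

definition run :: "nat \<Rightarrow> nat \<Rightarrow> nat \<Rightarrow> (nat \<Rightarrow> nat) \<Rightarrow> (nat \<Rightarrow> bool)
    \<Rightarrow> (nat \<Rightarrow> nat \<Rightarrow> bool) \<Rightarrow> complex \<Rightarrow> complex list" where
  "run n k h v d J \<gamma> =
     (let A = tableA k d J; V = tableV k v; C = tableC k J;
          s0 = (0, h, 0, 0, (replicate (2^n) 0)[h := \<gamma>]) :: state
      in snd (snd (snd (snd (foldl (step A V C \<gamma>) s0 [1..<2^k])))))"

end

theory Submission
  imports Defs
begin

unbundle bit_operations_syntax

text \<open>The loop enumerates \<open>{..<2^k}\<close> in Gray-code order: in iteration \<open>m\<close> the counter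
  \<open>y\<close> becomes \<open>gray m = m XOR m div 2\<close>, which differs from \<open>gray (m - 1)\<close> exactly in the
  bit \<open>lowbit m\<close>, and \<open>gray\<close> is a bijection of \<open>{..<2^k}\<close>. Along the way the registers
  hold \<open>x = h + \<Sum> y\<^sub>t v\<^sub>t\<close>, \<open>p = B y\<close> and \<open>q = d\<^sup>T y + 2 y\<^sup>T J y mod 4\<close>: setting or
  clearing bit \<open>t\<close> changes the quadratic form by \<open>\<plusminus>(d\<^sub>t + 2 J\<^sub>t\<^sub>t) + 2 (B y)\<^sub>t\<close>,
  because \<open>J\<close> is upper triangular and \<open>B\<close> has zero diagonal. Linear independence of the
  \<open>v\<^sub>t\<close> makes the positions written to pairwise distinct, so every other entry stays zero.\<close>

lemma xor_less_exp: "(x::nat) < 2^k \<Longrightarrow> y < 2^k \<Longrightarrow> x XOR y < 2^k"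
  by (metis take_bit_nat_eq_self_iff take_bit_xor)

lemma xor_left_cancel_iff: "a XOR b = a XOR c \<longleftrightarrow> b = (c :: 'a :: semiring_bit_operations)"
  by (auto simp: bit_eq_iff bit_xor_iff)

lemma exists_exp_times_odd: "0 < (m::nat) \<Longrightarrow> \<exists>s j. m = 2^s * (2*j+1)"
proof (induction m rule: less_induct)
  case (less m)
  show ?case
  proof (cases "even m")
    case True
    then obtain m' where m': "m = 2 * m'" by blast
    with less.prems obtain s j where "m' = 2^s * (2*j+1)" using less.IH[of m'] by auto
    with m' have "m = 2^Suc s * (2*j+1)" by simp
    then show ?thesis by blast
  next
    case False
    then obtain j where "m = 2^0 * (2*j+1)" by (auto elim: oddE)
    then show ?thesis by blast
  qed
qed

lemma bit_exp_times_odd: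
  assumes "m = (2::nat)^s * (2*j+1)"
  shows "bit m i \<longleftrightarrow> i = s \<or> s < i \<and> bit j (i - Suc s)"
proof -
  have "m = push_bit (Suc s) j + 2^s"
    by (simp add: assms push_bit_eq_mult)
  also have "bit \<dots> i \<longleftrightarrow> bit (push_bit (Suc s) j) i \<or> bit ((2::nat)^s) i"
    by (rule bit_disjunctive_add_iff) (auto simp: bit_push_bit_iff bit_exp_iff simp del: push_bit_Suc)
  finally show ?thesis by (auto simp: bit_push_bit_iff bit_exp_iff simp del: push_bit_Suc)
qed

lemma bit_exp_times_odd_minus_1:
  assumes "m = (2::nat)^s * (2*j+1)"
  shows "bit (m - 1) i \<longleftrightarrow> i < s \<or> s < i \<and> bit j (i - Suc s)"
proof -
  have "m - 1 = push_bit (Suc s) j + mask s"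
    by (simp add: assms push_bit_eq_mult mask_eq_exp_minus_1 algebra_simps)
  also have "bit \<dots> i \<longleftrightarrow> bit (push_bit (Suc s) j) i \<or> bit (mask s :: nat) i"
    by (rule bit_disjunctive_add_iff) (auto simp: bit_push_bit_iff bit_mask_iff)
  finally show ?thesis by (auto simp: bit_push_bit_iff bit_mask_iff simp del: push_bit_Suc)
qed

lemma lowbit_exp_times_odd:
  assumes m: "m = 2^s * (2*j+1)"
  shows "lowbit m = 2^s"
proof -
  have "0 < m" using m by simp
  then have "- int m = NOT (int (m - 1))"
    by (simp add: not_eq_complement of_nat_diff)
  then have "int m AND - int m = 2^s"
    by (intro bit_eqI) (auto simp: bit_and_iff bit_not_iff bit_of_nat_iff_bit bit_exp_iff
        bit_exp_times_odd[OF m] bit_exp_times_odd_minus_1[OF m, simplified])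
  then show ?thesis by (simp add: lowbit_def)
qed

definition gray :: "nat \<Rightarrow> nat" where
  "gray m = m XOR m div 2"

lemma bit_gray: "bit (gray m) i \<longleftrightarrow> bit m i \<noteq> bit m (Suc i)"
  by (simp add: gray_def bit_xor_iff bit_Suc)

lemma gray_exp_times_odd:
  assumes m: "m = 2^s * (2*j+1)"
  shows "gray m = gray (m - 1) XOR 2^s"
  by (rule bit_eqI) (auto simp: bit_gray bit_xor_iff bit_exp_iff
      bit_exp_times_odd[OF m] bit_exp_times_odd_minus_1[OF m, simplified])

lemma gray_0 [simp]: "gray 0 = 0"
  by (simp add: gray_def)

lemma gray_xor: "gray (a XOR b) = gray a XOR gray b"
  by (rule bit_eqI) (auto simp: bit_gray bit_xor_iff)

lemma gray_eq_0_iff: "gray c = 0 \<longleftrightarrow> c = 0"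
proof
  assume "gray c = 0"
  then have "c XOR c div 2 = c XOR c" by (simp add: gray_def)
  then have "c div 2 = c" by (simp only: xor_left_cancel_iff)
  then show "c = 0" by linarith
qed simp

lemma inj_gray: "inj gray"
proof (rule injI)
  fix a b assume "gray a = gray b"
  then have "a XOR b = 0" by (simp add: gray_xor flip: gray_eq_0_iff)
  then show "a = b" using xor_left_cancel_iff[of a b a] by simp
qed

lemma gray_less_exp: "m < 2^k \<Longrightarrow> gray m < 2^k"
  unfolding gray_def by (rule xor_less_exp) auto

lemma gray_image_lessThan: "gray ` {..<2^k} = {..<2^k}"
proof -
  have "gray ` {..<2^k} \<subseteq> {..<2^k}" by (auto intro: gray_less_exp)
  moreover have "card (gray ` {..<2^k}) = card {..<(2::nat)^k}"
    by (rule card_image) (rule inj_on_subset[OF inj_gray], simp)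
  ultimately show ?thesis by (simp add: card_subset_eq)
qed

lemma combo_Suc: "combo (Suc k) v y = combo k v y XOR (if bit y k then v (Suc k) else 0)"
proof -
  have foldr_acc: "foldr (\<lambda>t acc. c t XOR acc) ts a = foldr (\<lambda>t acc. c t XOR acc) ts 0 XOR a"
    for c :: "nat \<Rightarrow> nat" and ts a
    by (induction ts) (simp_all add: xor.assoc)
  have "[1..<Suc k + 1] = [1..<k+1] @ [Suc k]" by simp
  then show ?thesis
    unfolding combo_def by (simp only: foldr_append) (subst foldr_acc, simp)
qed

lemma combo_dim_0 [simp]: "combo 0 v y = 0"
  by (simp add: combo_def)

lemma combo_low_bits_0: "\<forall>i<k. \<not> bit y i \<Longrightarrow> combo k v y = 0"
  by (induction k) (simp_all add: combo_Suc)

lemma combo_0 [simp]: "combo k v 0 = 0"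
  by (simp add: combo_low_bits_0)

lemma combo_xor: "combo k v (a XOR b) = combo k v a XOR combo k v b"
  by (induction k) (auto simp: combo_Suc bit_xor_iff ac_simps)

lemma combo_exp: "t \<in> {1..k} \<Longrightarrow> combo k v (2^(t-1)) = v t"
proof (induction k)
  case (Suc k)
  have "combo k v (2^k) = 0"
    by (rule combo_low_bits_0) (simp add: bit_exp_iff)
  with Suc show ?case by (cases "t = Suc k") (auto simp: combo_Suc bit_exp_iff)
qed simp

lemma combo_less_exp: "\<forall>t\<in>{1..k}. v t < 2^n \<Longrightarrow> combo k v y < 2^n"
  by (induction k) (auto simp: combo_Suc intro!: xor_less_exp)

lemma inj_on_combo: "lin_indep_F2 k v \<Longrightarrow> inj_on (combo k v) {..<2^k}"
  by (rule inj_onI)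
    (metis lessThan_iff lin_indep_F2_def xor_less_exp combo_xor xor_self_eq xor_left_cancel_iff
      xor.right_neutral)

definition support :: "nat \<Rightarrow> nat \<Rightarrow> nat set" where
  "support k y = {t \<in> {1..k}. bit y (t - 1)}"

lemma sum_support: "(\<Sum>t=1..k. if bit y (t - 1) then f t else 0) = sum f (support k y)"
  unfolding support_def by (rule sum.inter_filter[symmetric]) simp

lemma support_0 [simp]: "support k 0 = {}"
  by (simp add: support_def)

lemma support_xor_exp:
  "t \<in> {1..k} \<Longrightarrow> \<not> bit y (t - 1) \<Longrightarrow> support k (y XOR 2^(t-1)) = insert t (support k y)"
  by (auto simp: support_def bit_xor_iff bit_exp_iff)

lemma bit_combo: "bit (combo k w y) b \<longleftrightarrow> odd (\<Sum>i\<in>support k y. of_bool (bit (w i) b) :: nat)"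
proof -
  have "bit (combo k w y) b \<longleftrightarrow> odd (\<Sum>i=1..k. if bit y (i - 1) then of_bool (bit (w i) b) else 0 :: nat)"
    by (induction k) (simp_all add: combo_Suc bit_xor_iff)
  then show ?thesis by (simp only: sum_support)
qed

lemma bit_Bcol: "bit (Bcol k J t) b \<longleftrightarrow> b < k \<and> Bmat J (Suc b) t"
proof -
  have "Bcol k J t = horner_sum of_bool 2 (map (\<lambda>b. Bmat J (Suc b) t) [0..<k])"
    unfolding Bcol_def horner_sum_eq_sum
    by (rule sum.reindex_bij_witness[of _ Suc "\<lambda>i. i - 1"]) auto
  then show ?thesis by (auto simp: bit_horner_sum_bit_iff)
qed

lemma sum_Bmat_support_xor_exp:
  assumes "t \<in> {1..k}"
  shows "(\<Sum>i\<in>support k (y XOR 2^(t-1)). of_bool (Bmat J i t)) = (\<Sum>i\<in>support k y. of_bool (Bmat J i t) :: nat)"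
  unfolding sum_support[symmetric] using assms
  by (intro sum.cong) (auto simp: bit_xor_iff bit_exp_iff Bmat_def simp del: sum_of_bool_eq)

definition phase_exponent :: "(nat \<Rightarrow> bool) \<Rightarrow> (nat \<Rightarrow> nat \<Rightarrow> bool) \<Rightarrow> nat set \<Rightarrow> nat" where
  "phase_exponent d J Y = (\<Sum>t\<in>Y. of_bool (d t)) + 2 * (\<Sum>i\<in>Y. \<Sum>j\<in>Y. of_bool (J i j))"

lemma phase_exponent_empty [simp]: "phase_exponent d J {} = 0"
  by (simp add: phase_exponent_def)

lemma phase_exponent_insert:
  assumes "finite Y" "t \<notin> Y" and upper: "\<forall>i\<in>insert t Y. \<forall>j\<in>insert t Y. j < i \<longrightarrow> \<not> J i j"
  shows "phase_exponent d J (insert t Y) = phase_exponent d J Y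
    + of_bool (d t) + 2 * of_bool (J t t) + 2 * (\<Sum>i\<in>Y. of_bool (Bmat J i t))"
proof -
  have "of_bool (J t i) + of_bool (J i t) = (of_bool (Bmat J i t) :: nat)" if "i \<in> Y" for i
    using that assms(2) upper by (cases i t rule: linorder_cases) (auto simp: Bmat_def)
  then have cross: "(\<Sum>j\<in>Y. of_bool (J t j)) + (\<Sum>i\<in>Y. of_bool (J i t)) = (\<Sum>i\<in>Y. of_bool (Bmat J i t) :: nat)"
    by (simp add: sum.distrib[symmetric] del: sum_of_bool_eq)
  show ?thesis
    using assms(1,2)
    by (simp add: phase_exponent_def sum.distrib cross[symmetric] algebra_simps del: sum_of_bool_eq)
qed

lemma i_power_phase_exponent:
  "\<i> ^ phase_exponent d J (support k y) = \<i> ^ (\<Sum>t=1..k. of_bool (d t \<and> bit y (t - 1)))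
     * (-1) ^ (\<Sum>i=1..k. \<Sum>j=1..k. of_bool (bit y (i - 1) \<and> J i j \<and> bit y (j - 1)))"
proof -
  have "(\<Sum>t=1..k. of_bool (d t \<and> bit y (t - 1))) = (\<Sum>t\<in>support k y. of_bool (d t) :: nat)"
    unfolding sum_support[symmetric] by (rule sum.cong) auto
  moreover have "(\<Sum>i=1..k. \<Sum>j=1..k. of_bool (bit y (i - 1) \<and> J i j \<and> bit y (j - 1)))
      = (\<Sum>i\<in>support k y. \<Sum>j\<in>support k y. of_bool (J i j) :: nat)"
    unfolding sum_support[symmetric] by (auto intro!: sum.cong simp del: sum_of_bool_eq)
  ultimately show ?thesis
    by (simp add: phase_exponent_def power_add power_mult)
qed

lemma int_add_two_times_mod_4: "(x + 2 * S) mod 4 = (x + 2 * of_bool (odd S)) mod (4::int)"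
proof -
  have "x + 2 * S = (x + 2 * of_bool (odd S)) + 4 * (S div 2)"
    by (cases "even S") (auto elim!: evenE oddE)
  then show ?thesis by (simp only: mod_mult_self2)
qed

lemma mod_4_update_add:
  assumes "Q' = Q + a + 2 * S"
  shows "(Q mod 4 + a + 2 * of_bool (odd S)) mod 4 = Q' mod (4::int)"
proof -
  have "(Q mod 4 + a + 2 * of_bool (odd S)) mod 4 = (Q + (a + 2 * of_bool (odd S))) mod 4"
    unfolding add.assoc by (rule mod_add_left_eq)
  also have "\<dots> = (Q + a + 2 * S) mod 4"
    using int_add_two_times_mod_4[of "Q + a" S] by (simp add: add.assoc)
  finally show ?thesis by (simp add: assms)
qed

lemma mod_4_update_sub:
  assumes "Q' = Q + a + 2 * S"
  shows "(Q' mod 4 - a + 2 * of_bool (odd S)) mod 4 = Q mod (4::int)"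
proof -
  have "(Q' mod 4 - a + 2 * of_bool (odd S)) mod 4 = (Q' mod 4 + (2 * of_bool (odd S) - a)) mod 4"
    by (simp add: algebra_simps)
  also have "\<dots> = (Q + 2 * of_bool (odd S) + 2 * S) mod 4"
    unfolding mod_add_left_eq by (simp add: assms algebra_simps)
  also have "\<dots> = (Q + 2 * of_bool (odd S) + 2 * of_bool (odd S)) mod 4"
    by (rule int_add_two_times_mod_4)
  finally show ?thesis by (cases "odd S") simp_all
qed

lemma i_power_mod_4: "\<i> ^ (n mod 4) = \<i> ^ n"
proof -
  have "\<i> ^ n = (\<i> ^ 4) ^ (n div 4) * \<i> ^ (n mod 4)"
    by (simp only: power_mult[symmetric] power_add[symmetric] mult_div_mod_eq)
  then show ?thesis by simp
qed

lemma nth_foldl_list_update: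
  assumes "inj_on g (set ts)" "t \<in> set ts" "g t < length L"
  shows "foldl (\<lambda>A t. A[g t := F t]) L ts ! g t = F t"
  using assms
proof (induction ts rule: rev_induct)
  case (snoc b ts)
  have "length (foldl (\<lambda>A t. A[g t := F t]) L ts) = length L"
    by (induction ts arbitrary: L) simp_all
  with snoc show ?case by (cases "t = b") (auto simp: inj_on_def)
qed simp

lemma nth_foldl_update_exp:
  assumes "t \<in> {1..k}" "length L = 2^k"
  shows "foldl (\<lambda>A t. A[2^(t-1) := F t]) L [1..<k+1] ! (2^(t-1)) = F t"
proof (rule nth_foldl_list_update)
  show "inj_on (\<lambda>t. (2::nat)^(t-1)) (set [1..<k+1])" by (rule inj_onI) auto
qed (use assms in auto)

lemma tableA_nth: "t \<in> {1..k} \<Longrightarrow> tableA k d J ! (2^(t-1)) = (of_bool (d t) + 2 * of_bool (J t t)) mod 4"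
  unfolding tableA_def by (rule nth_foldl_update_exp) simp_all

lemma tableV_nth: "t \<in> {1..k} \<Longrightarrow> tableV k v ! (2^(t-1)) = v t"
  unfolding tableV_def by (rule nth_foldl_update_exp) simp_all

lemma tableC_nth: "t \<in> {1..k} \<Longrightarrow> tableC k J ! (2^(t-1)) = Bcol k J t"
  unfolding tableC_def by (rule nth_foldl_update_exp) simp_all

context
  fixes n k h :: nat and v :: "nat \<Rightarrow> nat" and d :: "nat \<Rightarrow> bool"
    and J :: "nat \<Rightarrow> nat \<Rightarrow> bool" and \<gamma> :: complex
begin

definition loop_state :: "nat \<Rightarrow> complex list \<Rightarrow> state" where
  "loop_state y \<psi> = (y, h XOR combo k v y, combo k (Bcol k J) y,
     int (phase_exponent d J (support k y)) mod 4, \<psi>)"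

definition amplitude :: "nat \<Rightarrow> complex" where
  "amplitude y = \<gamma> * \<i> ^ phase_exponent d J (support k y)"

definition amplitudes_on :: "nat set \<Rightarrow> complex list \<Rightarrow> bool" where
  "amplitudes_on Y \<psi> \<longleftrightarrow> length \<psi> = 2^n
     \<and> (\<forall>y\<in>Y. \<psi> ! (h XOR combo k v y) = amplitude y)
     \<and> (\<forall>x<2^n. x \<notin> (\<lambda>y. h XOR combo k v y) ` Y \<longrightarrow> \<psi> ! x = 0)"

context
  assumes h_less: "h < 2^n"
    and v_less: "\<forall>t\<in>{1..k}. v t < 2^n"
    and indep: "lin_indep_F2 k v"
    and upper: "\<forall>i\<in>{1..k}. \<forall>j\<in>{1..k}. j < i \<longrightarrow> \<not> J i j"
begin

lemma phase_exponent_xor_exp: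
  assumes t: "t \<in> {1..k}" and "\<not> bit y (t - 1)"
  shows "phase_exponent d J (support k (y XOR 2^(t-1))) = phase_exponent d J (support k y)
    + of_bool (d t) + 2 * of_bool (J t t) + 2 * (\<Sum>i\<in>support k y. of_bool (Bmat J i t))"
proof -
  have sub: "support k y \<subseteq> {1..k}" by (auto simp: support_def)
  then have "finite (support k y)" by (rule finite_subset) simp
  moreover have "t \<notin> support k y" using assms by (simp add: support_def)
  moreover have "\<forall>i\<in>insert t (support k y). \<forall>j\<in>insert t (support k y). j < i \<longrightarrow> \<not> J i j"
    using t sub upper by blast
  ultimately show ?thesis
    unfolding support_xor_exp[OF assms] by (rule phase_exponent_insert)
qed

lemma phase_update_mod_4:
  fixes y :: nat
  assumes t: "t \<in> {1..k}"
  defines "q \<equiv> int (phase_exponent d J (support k y)) mod 4"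
    and "a \<equiv> tableA k d J ! (2^(t-1))"
    and "p_bit \<equiv> combo k (Bcol k J) y AND 2^(t-1) \<noteq> 0"
  shows "(if y AND 2^(t-1) = 0 then (q + a + 2 * of_bool p_bit) mod 4 else (q - a + 2 * of_bool p_bit) mod 4)
    = int (phase_exponent d J (support k (y XOR 2^(t-1)))) mod 4"
proof -
  define S where "S = (\<Sum>i\<in>support k y. of_bool (Bmat J i t) :: nat)"
  have a: "a = of_bool (d t) + 2 * of_bool (J t t)"
    unfolding a_def tableA_nth[OF t] by simp
  have "bit (Bcol k J i) (t - 1) = Bmat J i t" for i
    using t by (auto simp: bit_Bcol Bmat_def)
  then have "p_bit \<longleftrightarrow> odd S"
    by (simp add: p_bit_def S_def and_exp_eq_0_iff_not_bit bit_combo del: sum_of_bool_eq)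
  then have p: "of_bool p_bit = (of_bool (odd (int S)) :: int)" by simp
  show ?thesis
  proof (cases "bit y (t - 1)")
    case False
    have "int (phase_exponent d J (support k (y XOR 2^(t-1))))
        = int (phase_exponent d J (support k y)) + a + 2 * int S"
      unfolding phase_exponent_xor_exp[OF t False] by (simp add: a S_def ac_simps)
    then have "(q + a + 2 * of_bool p_bit) mod 4 = int (phase_exponent d J (support k (y XOR 2^(t-1)))) mod 4"
      unfolding q_def p by (rule mod_4_update_add)
    then show ?thesis using False by (simp add: and_exp_eq_0_iff_not_bit)
  next
    case True
    define y' where "y' = y XOR 2^(t-1)"
    have y: "y = y' XOR 2^(t-1)" by (simp add: y'_def xor.assoc)
    have "\<not> bit y' (t - 1)" using True by (simp add: y'_def bit_xor_iff bit_exp_iff)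
    from phase_exponent_xor_exp[OF t this, folded y]
      sum_Bmat_support_xor_exp[OF t, where y=y' and J=J, folded y]
    have "int (phase_exponent d J (support k y)) = int (phase_exponent d J (support k y')) + a + 2 * int S"
      by (simp add: a S_def ac_simps)
    then have "(q - a + 2 * of_bool p_bit) mod 4 = int (phase_exponent d J (support k y')) mod 4"
      unfolding q_def p by (rule mod_4_update_sub)
    then show ?thesis using True by (simp add: and_exp_eq_0_iff_not_bit y'_def)
  qed
qed

lemma step_loop_state:
  assumes "Suc m < 2^k"
  shows "step (tableA k d J) (tableV k v) (tableC k J) \<gamma> (loop_state (gray m) \<psi>) (Suc m)
    = loop_state (gray (Suc m)) (\<psi>[h XOR combo k v (gray (Suc m)) := amplitude (gray (Suc m))])"
proof -
  obtain s j where m: "Suc m = 2^s * (2*j+1)"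
    using exists_exp_times_odd[of "Suc m"] by blast
  have "(2::nat)^s \<le> Suc m"
    unfolding m by simp
  then have "(2::nat)^s < 2^k"
    using assms by linarith
  then have t: "Suc s \<in> {1..k}" by simp
  have low: "lowbit (Suc m) = 2^(Suc s - 1)"
    using lowbit_exp_times_odd[OF m] by simp
  have gray: "gray (Suc m) = gray m XOR 2^s"
    using gray_exp_times_odd[OF m] by simp
  show ?thesis
    unfolding step_def loop_state_def Let_def prod.case low phase_update_mod_4[OF t]
    by (simp add: gray tableV_nth[OF t, simplified] tableC_nth[OF t, simplified] combo_xor
        combo_exp[OF t, simplified] xor.assoc amplitude_def nat_mod_distrib i_power_mod_4)
qed

lemma amplitudes_on_insert:
  assumes "Y \<subseteq> {..<2^k}" "y < 2^k" and amp: "amplitudes_on Y \<psi>"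
  shows "amplitudes_on (insert y Y) (\<psi>[h XOR combo k v y := amplitude y])"
proof -
  have inj: "inj_on (\<lambda>y. h XOR combo k v y) {..<2^k}"
    using inj_on_combo[OF indep] by (simp add: inj_on_def xor_left_cancel_iff)
  have len: "length \<psi> = 2^n" and old: "\<forall>y\<in>Y. \<psi> ! (h XOR combo k v y) = amplitude y"
    and zero: "\<forall>x<2^n. x \<notin> (\<lambda>y. h XOR combo k v y) ` Y \<longrightarrow> \<psi> ! x = 0"
    using amp by (simp_all add: amplitudes_on_def)
  have "h XOR combo k v y < 2^n"
    using h_less v_less by (simp add: xor_less_exp combo_less_exp)
  then have new: "\<psi>[h XOR combo k v y := amplitude y] ! (h XOR combo k v y) = amplitude y"
    by (simp add: len)
  have "\<psi>[h XOR combo k v y := amplitude y] ! (h XOR combo k v y') = amplitude y'" if "y' \<in> Y" for y'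
  proof (cases "y' = y")
    case False
    then have "h XOR combo k v y' \<noteq> h XOR combo k v y"
      using that assms(1,2) by (intro inj_on_contraD[OF inj]) auto
    then show ?thesis using old that by simp
  qed (use new in simp)
  then show ?thesis
    using len new zero by (simp add: amplitudes_on_def)
qed

lemma foldl_step_loop_state:
  assumes "m < 2^k"
  shows "\<exists>\<psi>. foldl (step (tableA k d J) (tableV k v) (tableC k J) \<gamma>)
      (loop_state 0 ((replicate (2^n) 0)[h := \<gamma>])) [1..<Suc m] = loop_state (gray m) \<psi>
    \<and> amplitudes_on (gray ` {..m}) \<psi>"
  using assms
proof (induction m)
  case 0
  show ?case
    using h_less by (auto simp: amplitudes_on_def amplitude_def)
next
  case (Suc m)
  let ?step = "step (tableA k d J) (tableV k v) (tableC k J) \<gamma>"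
  let ?s0 = "loop_state 0 ((replicate (2^n) 0)[h := \<gamma>])"
  obtain \<psi> where fold: "foldl ?step ?s0 [1..<Suc m] = loop_state (gray m) \<psi>"
    and amp: "amplitudes_on (gray ` {..m}) \<psi>"
    using Suc by auto
  define \<psi>' where "\<psi>' = \<psi>[h XOR combo k v (gray (Suc m)) := amplitude (gray (Suc m))]"
  have "gray ` {..m} \<subseteq> {..<2^k}"
    using Suc.prems by (auto intro: gray_less_exp)
  then have "amplitudes_on (gray ` {..Suc m}) \<psi>'"
    using amp Suc.prems by (simp add: \<psi>'_def atMost_Suc amplitudes_on_insert gray_less_exp)
  moreover have "foldl ?step ?s0 [1..<Suc (Suc m)] = ?step (foldl ?step ?s0 [1..<Suc m]) (Suc m)"
    by simp
  ultimately show ?case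
    using fold step_loop_state[OF Suc.prems] by (auto simp: \<psi>'_def)
qed

lemma amplitudes_on_run: "amplitudes_on {..<2^k} (run n k h v d J \<gamma>)"
proof -
  obtain M where M: "2^k = Suc M" using not0_implies_Suc by fastforce
  let ?s0 = "loop_state 0 ((replicate (2^n) 0)[h := \<gamma>])"
  obtain \<psi> where fold: "foldl (step (tableA k d J) (tableV k v) (tableC k J) \<gamma>) ?s0 [1..<2^k]
      = loop_state (gray M) \<psi>" and amp: "amplitudes_on (gray ` {..M}) \<psi>"
    using foldl_step_loop_state[of M] by (auto simp: M)
  have s0: "(0, h, 0, 0, (replicate (2^n) 0)[h := \<gamma>]) = ?s0"
    by (simp add: loop_state_def)
  have "run n k h v d J \<gamma> = \<psi>"
    unfolding run_def Let_def s0 fold by (simp add: loop_state_def)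
  moreover have "gray ` {..M} = {..<2^k}"
    using gray_image_lessThan[of k] by (simp add: M flip: lessThan_Suc_atMost)
  ultimately show ?thesis
    using amp by simp
qed

end

end

theorem theorem1:
  fixes n k h :: nat and v :: "nat \<Rightarrow> nat" and d :: "nat \<Rightarrow> bool"
    and J :: "nat \<Rightarrow> nat \<Rightarrow> bool" and \<gamma> :: complex
  assumes "k \<le> n"
    and "h < 2^n"
    and "\<forall>t\<in>{1..k}. v t < 2^n"
    and "lin_indep_F2 k v"
    and "\<forall>i\<in>{1..k}. \<forall>j\<in>{1..k}. j < i \<longrightarrow> \<not> J i j"
    and "\<gamma> \<noteq> 0"
  shows "length (run n k h v d J \<gamma>) = 2^n
    \<and> (\<forall>y < 2^k. run n k h v d J \<gamma> ! (h XOR combo k v y)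
          = \<gamma> * \<i> ^ (\<Sum>t=1..k. of_bool (d t \<and> bit y (t - 1)))
              * (-1) ^ (\<Sum>i=1..k. \<Sum>j=1..k. of_bool (bit y (i - 1) \<and> J i j \<and> bit y (j - 1))))
    \<and> (\<forall>x < 2^n. (\<forall>y < 2^k. x \<noteq> h XOR combo k v y) \<longrightarrow> run n k h v d J \<gamma> ! x = 0)"
proof -
  have "amplitudes_on n k h v d J \<gamma> {..<2^k} (run n k h v d J \<gamma>)"
    by (rule amplitudes_on_run[OF assms(2-5)])
  then show ?thesis
    unfolding amplitudes_on_def amplitude_def i_power_phase_exponent mult.assoc
    by (simp add: Ball_def image_iff)
qed

end
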